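(* Let $q \geq 5$ be a prime power and let $\mathcal{X}$ be a plane curve of degree $q-1$ defined over $\mathbb{F}_q$ without $\mathbb{F}_q$-linear components with $\mathrm{N}_q(\mathcal{X}) = (q-1)^2$. Suppose $Q \in Z(\mathcal{X})$ is a point with $r = \psi_{q-1}(Q) \geq 2$, and let $l_1,\dots,l_r$ be the $\mathbb{F}_q$-lines through $Q$ containing exactly $q-1$ points of $\mathcal{X}(\mathbb{F}_q)$. Then the set $\bigcup_{i=1}^r \big((l_i(\mathbb{F}_q)\setminus\{Q\}) \cap Z(\mathcal{X})\big)$ is contained in a line.
   Context: $\mathcal{X}(\mathbb{F}_q)=\mathcal{X}\cap\mathbb{P}^2(\mathbb{F}_q)$, $\mathrm{N}_q(\mathcal{X})=\#\mathcal{X}(\mathbb{F}_q)$; "without $\mathbb{F}_q$-linear components" means no line defined over $\mathbb{F}_q$ is a component. $Z(\mathcal{X}) := \mathbb{P}^2(\mathbb{F}_q)\setminus\mathcal{X}(\mathbb{F}_q)$. For a point $P\in\mathbb{P}^2(\mathbb{F}_q)$ and $0\le i\le q+1$, $\psi_i(P)$ is the number of $\mathbb{F}_q$-lines $l$ through $P$ with $\#(l\cap\mathcal{X}(\mathbb{F}_q))=i$. *)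

theory Defs
  imports Main "HOL-Library.Poly_Mapping"
begin

text \<open>Polynomials in the three variables X_0, X_1, X_2 (= X, Y, Z) with coefficients
  in a field: finitely supported maps from monomials (exponent vectors) to coefficients.\<close>

type_synonym 'a mpoly3 = "(nat \<Rightarrow>\<^sub>0 nat) \<Rightarrow>\<^sub>0 'a"

definition var3 :: "nat \<Rightarrow> 'a::comm_ring_1 mpoly3" where
  "var3 i = Poly_Mapping.single (Poly_Mapping.single i 1) 1"

definition const3 :: "'a::comm_ring_1 \<Rightarrow> 'a mpoly3" where
  "const3 c = Poly_Mapping.single 0 c"

definition homog3 :: "nat \<Rightarrow> 'a::comm_ring_1 mpoly3 \<Rightarrow> bool" where
  "homog3 d F \<longleftrightarrow> F \<noteq> 0 \<and>
     (\<forall>m \<in> Poly_Mapping.keys F. Poly_Mapping.keys m \<subseteq> {0,1,2} \<and>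
        Poly_Mapping.lookup m 0 + Poly_Mapping.lookup m 1 + Poly_Mapping.lookup m 2 = d)"

definition eval3 :: "'a::comm_ring_1 mpoly3 \<Rightarrow> 'a \<times> 'a \<times> 'a \<Rightarrow> 'a" where
  "eval3 F p = (case p of (x, y, z) \<Rightarrow>
     (\<Sum>m \<in> Poly_Mapping.keys F. Poly_Mapping.lookup F m * x ^ Poly_Mapping.lookup m 0 * y ^ Poly_Mapping.lookup m 1 * z ^ Poly_Mapping.lookup m 2))"

text \<open>Points of P^2(F_q), represented by the normalized representative whose first
  nonzero coordinate is 1.\<close>
definition proj_points :: "('a::field \<times> 'a \<times> 'a) set" where
  "proj_points = {(x, y, z). (x = 1) \<or> (x = 0 \<and> y = 1) \<or> (x = 0 \<and> y = 0 \<and> z = 1)}"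

definition proj_line :: "'a::field \<Rightarrow> 'a \<Rightarrow> 'a \<Rightarrow> ('a \<times> 'a \<times> 'a) set" where
  "proj_line a b c = {(x, y, z) \<in> proj_points. a * x + b * y + c * z = 0}"

definition proj_lines :: "('a::field \<times> 'a \<times> 'a) set set" where
  "proj_lines = {proj_line a b c | a b c. (a, b, c) \<noteq> (0, 0, 0)}"

definition rat_points :: "'a::field mpoly3 \<Rightarrow> ('a \<times> 'a \<times> 'a) set" where
  "rat_points F = {P \<in> proj_points. eval3 F P = 0}"

definition Zset :: "'a::field mpoly3 \<Rightarrow> ('a \<times> 'a \<times> 'a) set" where
  "Zset F = proj_points - rat_points F"

definition no_linear_components :: "'a::field mpoly3 \<Rightarrow> bool" where
  "no_linear_components F \<longleftrightarrow>
     (\<forall>a b c. (a, b, c) \<noteq> (0, 0, 0) \<longrightarrow>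
        \<not> (const3 a * var3 0 + const3 b * var3 1 + const3 c * var3 2) dvd F)"

definition psi :: "'a::field mpoly3 \<Rightarrow> nat \<Rightarrow> 'a \<times> 'a \<times> 'a \<Rightarrow> nat" where
  "psi F i P = card {l \<in> proj_lines. P \<in> l \<and> card (l \<inter> rat_points F) = i}"

end

theory Submission
  imports Defs "HOL-Library.Cardinality" "HOL-Library.Product_Plus" "HOL-Computational_Algebra.Polynomial"
begin

text \<open>The required line is the polar line of \<open>Q\<close>, \<open>\<nabla>F(Q) \<cdot> P = 0\<close>. It is a line: the degree
  \<open>q - 1\<close> equals \<open>-1\<close> in \<open>\<bbbF>\<^sub>q\<close>, so Euler's identity gives \<open>\<nabla>F(Q) \<cdot> Q = -F(Q) \<noteq> 0\<close>.
  If \<open>l\<close> is an \<open>\<bbbF>\<^sub>q\<close>-line through \<open>Q\<close> with exactly \<open>q - 1\<close> points on \<open>\<X>\<close> and \<open>P \<in> l\<close> is not on \<open>\<X>\<close>,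
  then the \<open>q - 1\<close> remaining points of \<open>l\<close>, namely the points \<open>Q + tP\<close> with \<open>t \<noteq> 0\<close>, all lie on \<open>\<X>\<close>.
  Thus \<open>H(t) = F(Q + tP)\<close>, of degree at most \<open>q - 1\<close>, vanishes on \<open>\<bbbF>\<^sub>q\<^sup>*\<close>, which forces
  \<open>H = H(0) (1 - t\<^sup>q\<^sup>-\<^sup>1)\<close>; its linear coefficient \<open>\<nabla>F(Q) \<cdot> P\<close> is therefore \<open>0\<close>.\<close>

lemma of_nat_CARD_eq_0: "of_nat CARD('a) = (0::'a::{ring_1,finite})"
proof -
  have "(\<Sum>y\<in>UNIV. y + 1) = (\<Sum>y::'a\<in>UNIV. y)"
    using sum.reindex_bij_betw[OF bij_plus_right[of 1]] by simp
  then show ?thesis by (simp add: sum.distrib)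
qed

lemma power_CARD_minus_1_eq_1:
  fixes x :: "'a::{field,finite}"
  assumes "x \<noteq> 0"
  shows "x ^ (CARD('a) - 1) = 1"
proof -
  let ?U = "UNIV - {0::'a}"
  have "(\<Prod>y\<in>?U. x * y) = (\<Prod>y\<in>?U. y)"
    using assms by (intro prod.reindex_bij_witness[where i = "\<lambda>y. y / x" and j = "\<lambda>y. x * y"]) auto
  moreover have "(\<Prod>y\<in>?U. x * y) = x ^ card ?U * (\<Prod>y\<in>?U. y)"
    by (simp add: prod.distrib)
  moreover have "card ?U = CARD('a) - 1"
    by (simp add: card_Diff_subset)
  ultimately show ?thesis by simp
qed

lemma CARD_field_ge_2: "CARD('a::{field,finite}) \<ge> 2"
proof -
  have "card {0, 1::'a} \<le> CARD('a)" by (rule card_mono) auto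
  then show ?thesis by simp
qed

lemma poly_eq_if_vanishes_off_0:
  fixes H :: "'a::{field,finite} poly"
  assumes deg: "degree H < CARD('a)" and van: "\<And>s. s \<noteq> 0 \<Longrightarrow> poly H s = 0"
  shows "H = smult (poly H 0) (1 - monom 1 (CARD('a) - 1))"
proof -
  define K where "K = H - smult (poly H 0) (1 - monom 1 (CARD('a) - 1))"
  have "poly K s = 0" for s
    using van[of s] power_CARD_minus_1_eq_1[of s] CARD_field_ge_2[where 'a='a]
    by (cases "s = 0") (auto simp: K_def poly_monom)
  then have "{s. poly K s = 0} = UNIV" by auto
  moreover have "degree (1 - monom (1::'a) (CARD('a) - 1)) < CARD('a)"
    using CARD_field_ge_2[where 'a='a]
    by (intro le_less_trans[OF degree_diff_le_max]) (auto simp: degree_monom_eq)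
  then have "degree K < CARD('a)"
    unfolding K_def using deg
    by (intro le_less_trans[OF degree_diff_le_max]) (auto intro: le_less_trans[OF degree_smult_le])
  ultimately have "K = 0"
    using card_poly_roots_bound[of K] by fastforce
  then show ?thesis by (simp add: K_def)
qed

fun scale3 :: "'a::times \<Rightarrow> 'a \<times> 'a \<times> 'a \<Rightarrow> 'a \<times> 'a \<times> 'a" where
  "scale3 c (x, y, z) = (c * x, c * y, c * z)"

fun dot3 :: "'a::comm_semiring_1 \<times> 'a \<times> 'a \<Rightarrow> 'a \<times> 'a \<times> 'a \<Rightarrow> 'a" where
  "dot3 (a, b, c) (x, y, z) = a * x + b * y + c * z"

fun cross3 :: "'a::comm_ring \<times> 'a \<times> 'a \<Rightarrow> 'a \<times> 'a \<times> 'a \<Rightarrow> 'a \<times> 'a \<times> 'a" where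
  "cross3 (a0, a1, a2) (b0, b1, b2) = (a1 * b2 - a2 * b1, a2 * b0 - a0 * b2, a0 * b1 - a1 * b0)"

lemma dot3_add_right: "dot3 n (u + v) = dot3 n u + dot3 n v"
  by (cases n rule: prod_cases3, cases u rule: prod_cases3, cases v rule: prod_cases3)
    (simp add: algebra_simps)

lemma dot3_scale3_right: "dot3 n (scale3 c v) = c * dot3 n v"
  by (cases n rule: prod_cases3, cases v rule: prod_cases3) (simp add: algebra_simps)

lemma det3_eq_0_if_orthogonal:
  fixes n u v w :: "'a::field \<times> 'a \<times> 'a"
  assumes "n \<noteq> (0, 0, 0)" "dot3 n u = 0" "dot3 n v = 0" "dot3 n w = 0"
  shows "dot3 u (cross3 v w) = 0"
proof -
  have "scale3 (dot3 u (cross3 v w)) n =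
      scale3 (dot3 n u) (cross3 v w) + scale3 (dot3 n v) (cross3 w u) + scale3 (dot3 n w) (cross3 u v)"
    by (cases n rule: prod_cases3, cases u rule: prod_cases3, cases v rule: prod_cases3,
        cases w rule: prod_cases3) (simp add: algebra_simps)
  with assms show ?thesis
    by (cases n rule: prod_cases3, cases "cross3 v w" rule: prod_cases3,
        cases "cross3 w u" rule: prod_cases3, cases "cross3 u v" rule: prod_cases3) auto
qed

lemma in_span_if_det3_eq_0:
  fixes u v w :: "'a::field \<times> 'a \<times> 'a"
  assumes det: "dot3 u (cross3 v w) = 0" and indep: "cross3 u v \<noteq> (0, 0, 0)"
  obtains \<alpha> \<beta> where "w = scale3 \<alpha> u + scale3 \<beta> v"
proof -
  have cramer: "scale3 (dot3 x (cross3 u v)) w =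
      scale3 (dot3 u (cross3 v w)) x - scale3 (dot3 x (cross3 v w)) u - scale3 (dot3 x (cross3 w u)) v"
    for x
    by (cases x rule: prod_cases3, cases u rule: prod_cases3, cases v rule: prod_cases3,
        cases w rule: prod_cases3) (simp add: algebra_simps)
  obtain x :: "'a \<times> 'a \<times> 'a" where x: "dot3 x (cross3 u v) \<noteq> 0"
  proof (cases "cross3 u v" rule: prod_cases3)
    case (fields a b c)
    with indep that[of "(1, 0, 0)"] that[of "(0, 1, 0)"] that[of "(0, 0, 1)"] show ?thesis
      by auto
  qed
  define k A B where "k = dot3 x (cross3 u v)" and "A = dot3 x (cross3 v w)"
    and "B = dot3 x (cross3 w u)"
  have "scale3 k w = scale3 0 x - scale3 A u - scale3 B v"
    using cramer[of x] det by (simp add: k_def A_def B_def)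
  with x have "w = scale3 (- A / k) u + scale3 (- B / k) v"
    unfolding k_def[symmetric]
    by (cases u rule: prod_cases3, cases v rule: prod_cases3, cases w rule: prod_cases3,
        cases x rule: prod_cases3) (simp add: field_simps)
  then show ?thesis by (rule that)
qed

fun monom_val :: "(nat \<Rightarrow>\<^sub>0 nat) \<Rightarrow> 'a::comm_semiring_1 \<times> 'a \<times> 'a \<Rightarrow> 'a" where
  "monom_val m (x, y, z) =
     x ^ Poly_Mapping.lookup m 0 * y ^ Poly_Mapping.lookup m 1 * z ^ Poly_Mapping.lookup m 2"

lemma eval3_eq_sum:
  "eval3 F v = (\<Sum>m\<in>Poly_Mapping.keys F. Poly_Mapping.lookup F m * monom_val m v)"
  by (cases v rule: prod_cases3) (simp add: eval3_def mult.assoc)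

lemma monom_val_scale3:
  "monom_val m (scale3 c v) =
     c ^ (Poly_Mapping.lookup m 0 + Poly_Mapping.lookup m 1 + Poly_Mapping.lookup m 2) * monom_val m v"
  by (cases v rule: prod_cases3) (simp add: power_add power_mult_distrib mult_ac)

lemma eval3_scale3:
  assumes "homog3 d F"
  shows "eval3 F (scale3 c v) = c ^ d * eval3 F v"
proof -
  have "monom_val m (scale3 c v) = c ^ d * monom_val m v" if "m \<in> Poly_Mapping.keys F" for m
    using assms that by (simp add: homog3_def monom_val_scale3)
  then show ?thesis
    by (simp add: eval3_eq_sum sum_distrib_left mult.left_commute)
qed

text \<open>When \<open>Poly_Mapping.lookup m i = 0\<close> the truncated subtraction in \<open>m - Poly_Mapping.single i 1\<close>
  is harmless: the term carries the factor \<open>of_nat (Poly_Mapping.lookup m i)\<close>.\<close>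

definition partial3 :: "'a::comm_ring_1 mpoly3 \<Rightarrow> nat \<Rightarrow> 'a \<times> 'a \<times> 'a \<Rightarrow> 'a" where
  "partial3 F i v = (\<Sum>m\<in>Poly_Mapping.keys F. Poly_Mapping.lookup F m *
     (of_nat (Poly_Mapping.lookup m i) * monom_val (m - Poly_Mapping.single i 1) v))"

definition grad3 :: "'a::comm_ring_1 mpoly3 \<Rightarrow> 'a \<times> 'a \<times> 'a \<Rightarrow> 'a \<times> 'a \<times> 'a" where
  "grad3 F v = (partial3 F 0 v, partial3 F 1 v, partial3 F 2 v)"

lemma euler_identity_monom_val:
  "x * (of_nat (Poly_Mapping.lookup m 0) * monom_val (m - Poly_Mapping.single 0 1) (x, y, z))
   + y * (of_nat (Poly_Mapping.lookup m 1) * monom_val (m - Poly_Mapping.single 1 1) (x, y, z))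
   + z * (of_nat (Poly_Mapping.lookup m 2) * monom_val (m - Poly_Mapping.single 2 1) (x, y, z))
   = of_nat (Poly_Mapping.lookup m 0 + Poly_Mapping.lookup m 1 + Poly_Mapping.lookup m 2)
     * monom_val m (x, y, z)"
proof -
  have "x * (of_nat i * (x ^ (i - 1) * y ^ j * z ^ k)) + y * (of_nat j * (x ^ i * y ^ (j - 1) * z ^ k))
      + z * (of_nat k * (x ^ i * y ^ j * z ^ (k - 1))) = of_nat (i + j + k) * (x ^ i * y ^ j * z ^ k)"
    for i j k
    by (cases i; cases j; cases k) (simp_all add: algebra_simps)
  from this[of "Poly_Mapping.lookup m 0" "Poly_Mapping.lookup m 1" "Poly_Mapping.lookup m 2"]
  show ?thesis by (simp add: lookup_minus lookup_single)
qed

lemma euler_identity: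
  assumes "homog3 d F"
  shows "dot3 (grad3 F v) v = of_nat d * eval3 F v"
proof (cases v rule: prod_cases3)
  case (fields x y z)
  have deg: "d = Poly_Mapping.lookup m 0 + Poly_Mapping.lookup m 1 + Poly_Mapping.lookup m 2"
    if "m \<in> Poly_Mapping.keys F" for m
    using assms that by (simp add: homog3_def)
  have "dot3 (grad3 F v) v = (\<Sum>m\<in>Poly_Mapping.keys F. Poly_Mapping.lookup F m *
      (x * (of_nat (Poly_Mapping.lookup m 0) * monom_val (m - Poly_Mapping.single 0 1) (x, y, z))
     + y * (of_nat (Poly_Mapping.lookup m 1) * monom_val (m - Poly_Mapping.single 1 1) (x, y, z))
     + z * (of_nat (Poly_Mapping.lookup m 2) * monom_val (m - Poly_Mapping.single 2 1) (x, y, z))))"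
    by (simp add: fields grad3_def partial3_def sum_distrib_left sum_distrib_right sum.distrib
        algebra_simps del: monom_val.simps)
  also have "\<dots> = (\<Sum>m\<in>Poly_Mapping.keys F. Poly_Mapping.lookup F m * (of_nat d * monom_val m v))"
    by (rule sum.cong) (simp_all only: euler_identity_monom_val deg fields)
  also have "\<dots> = of_nat d * eval3 F v"
    by (simp add: eval3_eq_sum sum_distrib_left mult_ac del: monom_val.simps)
  finally show ?thesis .
qed

fun line_poly :: "'a::comm_ring_1 mpoly3 \<Rightarrow> 'a \<times> 'a \<times> 'a \<Rightarrow> 'a \<times> 'a \<times> 'a \<Rightarrow> 'a poly" where
  "line_poly F (q0, q1, q2) (p0, p1, p2) = (\<Sum>m\<in>Poly_Mapping.keys F.
     smult (Poly_Mapping.lookup F m) (monom_val m ([:q0, p0:], [:q1, p1:], [:q2, p2:])))"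

lemma poly_line_poly: "poly (line_poly F Q P) s = eval3 F (Q + scale3 s P)"
  by (cases Q rule: prod_cases3, cases P rule: prod_cases3)
    (simp add: eval3_eq_sum poly_sum algebra_simps)

lemma degree_line_poly:
  assumes "homog3 d F"
  shows "degree (line_poly F Q P) \<le> d"
proof -
  obtain q0 q1 q2 p0 p1 p2 where coords: "Q = (q0, q1, q2)" "P = (p0, p1, p2)"
    by (cases Q rule: prod_cases3, cases P rule: prod_cases3) blast
  have pow: "degree ([:a, b:] ^ k) \<le> k" for a b :: 'a and k
  proof -
    have "degree [:a, b:] * k \<le> k"
      using mult_le_mono1[of "degree [:a, b:]" 1 k] by simp
    then show ?thesis using degree_power_le order.trans by blast
  qed
  have monom_deg: "degree (monom_val m ([:q0, p0:], [:q1, p1:], [:q2, p2:]))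
      \<le> Poly_Mapping.lookup m 0 + Poly_Mapping.lookup m 1 + Poly_Mapping.lookup m 2" for m
    by (simp del: pCons_0_0) (meson add_mono degree_mult_le order.trans pow)
  have "degree (smult c (monom_val m ([:q0, p0:], [:q1, p1:], [:q2, p2:]))) \<le> d"
    if "m \<in> Poly_Mapping.keys F" for m c
  proof -
    have "Poly_Mapping.lookup m 0 + Poly_Mapping.lookup m 1 + Poly_Mapping.lookup m 2 = d"
      using assms that unfolding homog3_def by blast
    then show ?thesis
      using monom_deg[of m] by (intro order.trans[OF degree_smult_le]) simp
  qed
  then show ?thesis
    unfolding coords line_poly.simps by (intro degree_sum_le) auto
qed

lemma coeff_mult_1: "coeff (p * q) 1 = coeff p 0 * coeff q 1 + coeff p 1 * coeff q 0"
  by (simp add: coeff_mult atMost_Suc add.commute)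

lemma coeff_linear_power_1: "coeff ([:a, b:] ^ n) 1 = of_nat n * a ^ (n - 1) * b"
proof (induction n)
  case (Suc n)
  then show ?case
    by (cases n) (simp_all add: coeff_mult_1 coeff_0_power algebra_simps)
qed simp

lemma coeff_1_line_poly: "coeff (line_poly F Q P) 1 = dot3 (grad3 F Q) P"
proof -
  obtain q0 q1 q2 p0 p1 p2 where coords: "Q = (q0, q1, q2)" "P = (p0, p1, p2)"
    by (cases Q rule: prod_cases3, cases P rule: prod_cases3) blast
  have "coeff (monom_val m ([:q0, p0:], [:q1, p1:], [:q2, p2:])) 1 =
      of_nat (Poly_Mapping.lookup m 0) * monom_val (m - Poly_Mapping.single 0 1) Q * p0
    + of_nat (Poly_Mapping.lookup m 1) * monom_val (m - Poly_Mapping.single 1 1) Q * p1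
    + of_nat (Poly_Mapping.lookup m 2) * monom_val (m - Poly_Mapping.single 2 1) Q * p2" for m
    unfolding coords monom_val.simps coeff_mult_1 coeff_mult_0 coeff_0_power coeff_linear_power_1
    by (simp add: lookup_minus lookup_single algebra_simps)
  then show ?thesis
    by (simp add: coords grad3_def partial3_def coeff_sum sum_distrib_left sum_distrib_right
        sum.distrib algebra_simps del: monom_val.simps pCons_0_0)
qed

fun proj_point :: "'a::field \<times> 'a \<times> 'a \<Rightarrow> 'a \<times> 'a \<times> 'a" where
  "proj_point (x, y, z) =
     (if x \<noteq> 0 then (1, y / x, z / x) else if y \<noteq> 0 then (0, 1, z / y) else (0, 0, 1))"

lemma proj_point_in_proj_points: "proj_point v \<in> proj_points"
  by (cases v rule: prod_cases3) (simp add: proj_points_def)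

lemma proj_point_scale3: "u \<in> proj_points \<Longrightarrow> c \<noteq> 0 \<Longrightarrow> proj_point (scale3 c u) = u"
  by (auto simp: proj_points_def)

lemma scale3_proj_point:
  fixes v :: "'a::field \<times> 'a \<times> 'a"
  assumes "v \<noteq> (0, 0, 0)"
  obtains c where "c \<noteq> 0" and "v = scale3 c (proj_point v)"
proof (cases v rule: prod_cases3)
  case (fields x y z)
  with assms that[of x] that[of y] that[of z] show ?thesis
    by (cases "x = 0"; cases "y = 0") auto
qed

lemma proj_points_independent:
  assumes "u \<in> proj_points" "v \<in> proj_points" "u \<noteq> v"
    and "scale3 \<alpha> u + scale3 \<beta> v = (0, 0, 0)"
  shows "\<alpha> = 0 \<and> \<beta> = 0"
  using assms
  by (cases u rule: prod_cases3, cases v rule: prod_cases3)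
    (auto simp: proj_points_def add_eq_0_iff)

lemma add_scale3_neq_0:
  "u \<in> proj_points \<Longrightarrow> v \<in> proj_points \<Longrightarrow> u \<noteq> v \<Longrightarrow> u + scale3 t v \<noteq> (0, 0, 0)"
  using proj_points_independent[of u v 1 t]
  by (cases u rule: prod_cases3, cases v rule: prod_cases3) auto

lemma cross3_neq_0_if_proj_points_neq:
  "u \<in> proj_points \<Longrightarrow> v \<in> proj_points \<Longrightarrow> u \<noteq> v \<Longrightarrow> cross3 u v \<noteq> (0, 0, 0)"
  by (cases u rule: prod_cases3, cases v rule: prod_cases3) (auto simp: proj_points_def)

lemma mem_proj_line_iff: "v \<in> proj_line a b c \<longleftrightarrow> v \<in> proj_points \<and> dot3 (a, b, c) v = 0"
  by (cases v rule: prod_cases3) (simp add: proj_line_def)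

lemma proj_point_add_scale3_in_proj_line:
  fixes Q P :: "'a::field \<times> 'a \<times> 'a"
  assumes Q: "Q \<in> proj_line a b c" and P: "P \<in> proj_line a b c" and QP: "Q \<noteq> P"
    and t: "t \<noteq> 0"
  shows "proj_point (Q + scale3 t P) \<in> proj_line a b c - {Q, P}"
proof -
  define S where "S = proj_point (Q + scale3 t P)"
  have Qpp: "Q \<in> proj_points" and Ppp: "P \<in> proj_points"
    and nQ: "dot3 (a, b, c) Q = 0" and nP: "dot3 (a, b, c) P = 0"
    using Q P by (simp_all add: mem_proj_line_iff)
  note indep = proj_points_independent[OF Qpp Ppp QP]
  obtain k where k: "k \<noteq> 0" and QtP: "Q + scale3 t P = scale3 k S"
    unfolding S_def using scale3_proj_point[OF add_scale3_neq_0[OF Qpp Ppp QP]] .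
  have "k * dot3 (a, b, c) S = 0"
    using arg_cong[OF QtP, of "dot3 (a, b, c)"] nQ nP
    by (simp only: dot3_add_right dot3_scale3_right) simp
  with k have "S \<in> proj_line a b c"
    by (simp add: mem_proj_line_iff S_def proj_point_in_proj_points)
  moreover have "S \<noteq> Q"
    using indep[of "1 - k" t] QtP t
    by (cases Q rule: prod_cases3, cases P rule: prod_cases3) (auto simp: algebra_simps)
  moreover have "S \<noteq> P"
    using indep[of 1 "t - k"] QtP
    by (cases Q rule: prod_cases3, cases P rule: prod_cases3) (auto simp: algebra_simps)
  ultimately show ?thesis by (simp add: S_def)
qed

lemma proj_line_minus_two_points:
  fixes Q P :: "'a::field \<times> 'a \<times> 'a"
  assumes n: "(a, b, c) \<noteq> (0, 0, 0)"
    and Q: "Q \<in> proj_line a b c" and P: "P \<in> proj_line a b c" and QP: "Q \<noteq> P"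
  shows "proj_line a b c - {Q, P} = (\<lambda>t. proj_point (Q + scale3 t P)) ` (UNIV - {0})"
proof (intro equalityI subsetI)
  fix S assume S: "S \<in> proj_line a b c - {Q, P}"
  have Qpp: "Q \<in> proj_points" and Ppp: "P \<in> proj_points" and Spp: "S \<in> proj_points"
    and nQ: "dot3 (a, b, c) Q = 0" and nP: "dot3 (a, b, c) P = 0" and nS: "dot3 (a, b, c) S = 0"
    using Q P S by (simp_all add: mem_proj_line_iff)
  have "dot3 Q (cross3 P S) = 0"
    using det3_eq_0_if_orthogonal[OF n nQ nP nS] .
  then obtain \<alpha> \<beta> where S_eq: "S = scale3 \<alpha> Q + scale3 \<beta> P"
    using in_span_if_det3_eq_0 cross3_neq_0_if_proj_points_neq[OF Qpp Ppp QP] by blast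
  have "\<alpha> \<noteq> 0"
    using proj_points_independent[OF Spp Ppp, of 1 "- \<beta>"] S S_eq
    by (cases S rule: prod_cases3, cases Q rule: prod_cases3, cases P rule: prod_cases3) auto
  moreover have "\<beta> \<noteq> 0"
    using proj_points_independent[OF Spp Qpp, of 1 "- \<alpha>"] S S_eq
    by (cases S rule: prod_cases3, cases Q rule: prod_cases3, cases P rule: prod_cases3) auto
  ultimately have "Q + scale3 (\<beta> / \<alpha>) P = scale3 (1 / \<alpha>) S"
    using S_eq by (cases Q rule: prod_cases3, cases P rule: prod_cases3) (simp add: field_simps)
  with \<open>\<alpha> \<noteq> 0\<close> \<open>\<beta> \<noteq> 0\<close> show "S \<in> (\<lambda>t. proj_point (Q + scale3 t P)) ` (UNIV - {0})"
    by (intro image_eqI[of _ _ "\<beta> / \<alpha>"]) (simp_all add: proj_point_scale3 Spp)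
next
  fix S assume "S \<in> (\<lambda>t. proj_point (Q + scale3 t P)) ` (UNIV - {0})"
  then obtain t where "t \<noteq> 0" and "S = proj_point (Q + scale3 t P)" by blast
  then show "S \<in> proj_line a b c - {Q, P}"
    using proj_point_add_scale3_in_proj_line[OF Q P QP] by simp
qed

lemma eval3_proj_point_eq_0_iff:
  assumes "homog3 d F" and "v \<noteq> (0, 0, 0)"
  shows "eval3 F (proj_point v) = 0 \<longleftrightarrow> eval3 F v = 0"
proof -
  obtain c where "c \<noteq> 0" and "v = scale3 c (proj_point v)"
    using scale3_proj_point[OF assms(2)] .
  then have "eval3 F v = c ^ d * eval3 F (proj_point v)"
    using eval3_scale3[OF assms(1)] by metis
  with \<open>c \<noteq> 0\<close> show ?thesis by simp
qed

lemma eval3_eq_0_on_line_with_card_minus_1_points: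
  fixes F :: "'a::{field,finite} mpoly3"
  assumes hom: "homog3 d F" and n: "(a, b, c) \<noteq> (0, 0, 0)"
    and Q: "Q \<in> proj_line a b c - rat_points F" and P: "P \<in> proj_line a b c - rat_points F"
    and QP: "Q \<noteq> P" and card_l: "card (proj_line a b c \<inter> rat_points F) = CARD('a) - 1"
    and t: "t \<noteq> 0"
  shows "eval3 F (Q + scale3 t P) = 0"
proof -
  let ?l = "proj_line a b c"
  have param: "?l - {Q, P} = (\<lambda>t. proj_point (Q + scale3 t P)) ` (UNIV - {0})"
    using proj_line_minus_two_points[OF n _ _ QP] Q P by blast
  have "card (?l - {Q, P}) \<le> CARD('a) - 1"
    unfolding param using card_image_le[of "UNIV - {0::'a}"] by (simp add: card_Diff_subset)
  moreover have "?l \<inter> rat_points F \<subseteq> ?l - {Q, P}"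
    using Q P by blast
  ultimately have "?l \<inter> rat_points F = ?l - {Q, P}"
    using card_l by (intro card_seteq) simp_all
  then have "eval3 F (proj_point (Q + scale3 t P)) = 0"
    using param t by (auto simp: rat_points_def)
  moreover have "Q + scale3 t P \<noteq> (0, 0, 0)"
    using Q P QP by (intro add_scale3_neq_0) (simp_all add: mem_proj_line_iff)
  ultimately show ?thesis
    using eval3_proj_point_eq_0_iff[OF hom] by blast
qed

lemma dot3_grad3_eq_0_on_line_with_card_minus_1_points:
  fixes F :: "'a::{field,finite} mpoly3"
  assumes hom: "homog3 (CARD('a) - 1) F" and q: "CARD('a) \<ge> 3"
    and l: "l \<in> proj_lines" and Q: "Q \<in> l - rat_points F" and P: "P \<in> l - rat_points F"
    and QP: "Q \<noteq> P" and card_l: "card (l \<inter> rat_points F) = CARD('a) - 1"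
  shows "dot3 (grad3 F Q) P = 0"
proof -
  obtain a b c where n: "(a, b, c) \<noteq> (0, 0, 0)" and l_eq: "l = proj_line a b c"
    using l unfolding proj_lines_def by blast
  let ?H = "line_poly F Q P"
  have "degree ?H < CARD('a)"
    using degree_line_poly[OF hom, of Q P] q by linarith
  moreover have "poly ?H s = 0" if "s \<noteq> 0" for s
    unfolding poly_line_poly
    using eval3_eq_0_on_line_with_card_minus_1_points[OF hom n _ _ QP _ that] Q P card_l l_eq by blast
  ultimately have "?H = smult (poly ?H 0) (1 - monom 1 (CARD('a) - 1))"
    by (rule poly_eq_if_vanishes_off_0)
  moreover have "coeff (1 - monom 1 (CARD('a) - 1)) 1 = (0::'a)"
    using q by (simp add: coeff_monom)
  ultimately have "coeff ?H 1 = 0"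
    by (metis coeff_smult mult_zero_right)
  then show ?thesis by (simp only: coeff_1_line_poly)
qed

lemma grad3_neq_0:
  fixes F :: "'a::{field,finite} mpoly3"
  assumes "homog3 (CARD('a) - 1) F" and "eval3 F Q \<noteq> 0"
  shows "grad3 F Q \<noteq> (0, 0, 0)"
proof
  have "(of_nat (CARD('a) - 1) :: 'a) = - 1"
    using of_nat_CARD_eq_0[where 'a='a] CARD_field_ge_2[where 'a='a] by (simp add: of_nat_diff)
  then have "dot3 (grad3 F Q) Q = - eval3 F Q"
    using euler_identity[OF assms(1)] by simp
  moreover assume "grad3 F Q = (0, 0, 0)"
  ultimately show False
    using assms(2) by (cases Q rule: prod_cases3) simp
qed

theorem corollary3p9:
  fixes F :: "('a::{field, finite}) mpoly3" and Q :: "'a \<times> 'a \<times> 'a"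
  assumes "card (UNIV :: 'a set) \<ge> 5"
    and "homog3 (card (UNIV :: 'a set) - 1) F"
    and "no_linear_components F"
    and "card (rat_points F) = (card (UNIV :: 'a set) - 1)^2"
    and "Q \<in> Zset F"
    and "psi F (card (UNIV :: 'a set) - 1) Q \<ge> 2"
  shows "\<exists>L \<in> proj_lines.
     (\<Union>l \<in> {l \<in> proj_lines. Q \<in> l \<and> card (l \<inter> rat_points F) = card (UNIV :: 'a set) - 1}.
        (l - {Q}) \<inter> Zset F) \<subseteq> L"
proof -
  have q: "CARD('a) \<ge> 3" and hom: "homog3 (CARD('a) - 1) F" using assms(1,2) by simp_all
  have Q: "Q \<in> proj_points - rat_points F" using assms(5) by (simp add: Zset_def)
  obtain a b c where grad: "grad3 F Q = (a, b, c)" by (cases "grad3 F Q" rule: prod_cases3)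
  have "eval3 F Q \<noteq> 0" using Q by (simp add: rat_points_def)
  then have "(a, b, c) \<noteq> (0, 0, 0)" using grad3_neq_0[OF hom] grad by metis
  then have "proj_line a b c \<in> proj_lines" by (auto simp: proj_lines_def)
  moreover have "P \<in> proj_line a b c"
    if "P \<in> (\<Union>l \<in> {l \<in> proj_lines. Q \<in> l \<and> card (l \<inter> rat_points F) = CARD('a) - 1}.
        (l - {Q}) \<inter> Zset F)" for P
  proof -
    from that obtain l where "l \<in> proj_lines" "Q \<in> l" "card (l \<inter> rat_points F) = CARD('a) - 1"
      and "P \<in> l" "P \<noteq> Q" "P \<in> Zset F" by blast
    then have "dot3 (grad3 F Q) P = 0"
      using Q by (intro dot3_grad3_eq_0_on_line_with_card_minus_1_points[OF hom q]) (auto simp: Zset_def)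
    with \<open>P \<in> Zset F\<close> show ?thesis by (simp add: grad mem_proj_line_iff Zset_def)
  qed
  ultimately show ?thesis by blast
qed

end
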